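(* Let $\mathcal{E}=(\mathbf{R},\mathbf{S},\Sigma_{st},\mathbf{F})$ be a constructive relational to RDF data exchange setting with $\mathbf{S}=(\mathcal{T},\delta)$. For any instance $I$ of $\mathcal{R}$ and any typed graph $J$ that is a solution for $I$ to $\Sigma_{st}\cup\Sigma^{TP}_{\mathbf{S}}\cup\Sigma^{PF}_{\mathbf{S}}$, if $N_J$ contains a set $X$ with $\{\mathit{Literal},T\}\subseteq X$ for some $T\in\mathcal{T}$, then $I$ does not admit a solution to $\mathcal{E}$ that includes $J$.
   Context: Values: $\mathsf{Iri}$ (IRIs, containing predicates $\mathsf{Pred}$), $\mathsf{NullIri}$, $\mathsf{Lit}$ with null literals $\mathsf{NullLit}\subseteq\mathsf{Lit}$. A typed graph: finite set of facts $\mathit{Triple}(s,p,o)$ ($s\in\mathsf{Iri}\cup\mathsf{NullIri}$, $p\in\mathsf{Pred}$, $o\in\mathsf{Iri}\cup\mathsf{NullIri}\cup\mathsf{Lit}$) plus type facts $T(n)$ ($T\in\mathcal{T}$) and $\mathit{Literal}(n)$; literal nodes may only have type $\mathit{Literal}$, non-literal nodes only types in $\mathcal{T}$; $\mathit{types}_G(n)=\{T\mid T(n)\in G\}$. Deterministic shape schema $\mathbf{S}=(\mathcal{T},\delta)$, $\delta:\mathcal{T}\times\mathsf{Pred}\rightharpoonup(\mathcal{T}\cup\{\mathit{Literal}\})\times\{1,?,*,+\}$, $\delta(T,p)=S^\mu$. $\Sigma^{TP}_{\mathbf{S}}$ consists of the rules $T(x)\land\mathit{Triple}(x,p,y)\Rightarrow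 S(y)$ for each $\delta(T,p)=S^\mu$; $\Sigma^{PF}_{\mathbf{S}}$ of the rules $T(x)\land\mathit{Triple}(x,p,y_1)\land\mathit{Triple}(x,p,y_2)\Rightarrow y_1=y_2$ for each $\delta(T,p)=S^\mu$ with $\mu\in\{1,?\}$; $\mathbf{S}$ additionally requires (PE) $T(x)\Rightarrow\exists y.\,\mathit{Triple}(x,p,y)$ when $\mu\in\{1,+\}$. Constructive setting: $\mathbf{R}=(\mathcal{R},\Sigma_{fd})$ relational schema; IRI constructors $f\in\mathcal{F}$ interpreted as $f^F:\mathsf{Lit}^n\to\mathsf{Iri}$ with pairwise disjoint ranges; st-tgds full, $\forall\bar x.\,\varphi\Rightarrow\psi$ with $\varphi$ a conjunction of atoms over $\mathcal{R}$ and $\psi$ a conjunction of atoms $\mathit{Triple}(t_1,p,t_2)$, $T(t)$, $\mathit{Literal}(t)$ with terms variables or $f(\bar u)$. A solution for $I$ to a set of dependencies is a typed graph $J$ such that $I\cup J$ (function symbols interpreted by $F$) satisfies them; a solution to $\mathcal{E}$ is a typed graph satisfying $\mathbf{S}$ and $\Sigma_{st}$ together with $I$. Let $\mathit{Req}(X)=\{p\mid \exists T\in X,S,\mu\in\{1,+\}: \delta(T,p)=S^\mu\}$ and $\Delta(X,p)=\{S\mid\exists T\in X,\mu: \delta(T,p)=S^\mu\}$. The frontier of $J$ is $\mathbb{F}=\{(n,p)\mid n$ a node of $J$, $p\in\mathit{Req}(\mathit{types}_J(n))$, no $\mathit{Triple}(n,p,m)\in J\}$. Let $N_0=\{\Delta(\mathit{types}_J(n),p)\mid(n,p)\in\mathbb{F}\}$,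 $N_i=\{\Delta(X,p)\mid X\in N_{i-1},p\in\mathit{Req}(X)\}$ for $i\ge1$, and $N_J=\bigcup_{i\ge0}N_i$. *)

theory Defs
  imports Main
begin

text \<open>Values: IRIs (type 'i, predicates are a subset Pred of 'i), null IRIs, literals
  (type 'l; null literals are a subset of the literals and play no special role here).\<close>
datatype ('i,'l) val = Iri 'i | NullIri nat | Lit 'l

definition is_lit :: "('i,'l) val \<Rightarrow> bool" where
  "is_lit v \<longleftrightarrow> (\<exists>l. v = Lit l)"

datatype 't ty = Ty 't | LiteralTy

datatype mult = M1 | MOpt | MStar | MPlus

datatype ('i,'l,'t) fact = Triple "('i,'l) val" 'i "('i,'l) val" | Typ "'t ty" "('i,'l) val"

type_synonym ('i,'l,'t) graph = "('i,'l,'t) fact set"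

definition typed_graph :: "'i set \<Rightarrow> 't set \<Rightarrow> ('i,'l,'t) graph \<Rightarrow> bool" where
  "typed_graph Pred Types G \<longleftrightarrow>
     finite G \<and>
     (\<forall>s p ob. Triple s p ob \<in> G \<longrightarrow> \<not> is_lit s \<and> p \<in> Pred) \<and>
     (\<forall>T n. Typ (Ty T) n \<in> G \<longrightarrow> T \<in> Types \<and> \<not> is_lit n) \<and>
     (\<forall>n. Typ LiteralTy n \<in> G \<longrightarrow> is_lit n)"

definition types_of :: "('i,'l,'t) graph \<Rightarrow> ('i,'l) val \<Rightarrow> 't ty set" where
  "types_of G n = {X. Typ X n \<in> G}"

definition nodes :: "('i,'l,'t) graph \<Rightarrow> ('i,'l) val set" where
  "nodes G = {s. \<exists>p ob. Triple s p ob \<in> G} \<union> {ob. \<exists>s p. Triple s p ob \<in> G} \<union> {n. \<exists>X. Typ X n \<in> G}"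

type_synonym ('i,'t) shape_fun = "'t \<Rightarrow> 'i \<rightharpoonup> ('t ty \<times> mult)"

definition wf_shape_schema :: "'i set \<Rightarrow> 't set \<Rightarrow> ('i,'t) shape_fun \<Rightarrow> bool" where
  "wf_shape_schema Pred Types \<delta> \<longleftrightarrow>
     (\<forall>T p. \<delta> T p \<noteq> None \<longrightarrow> T \<in> Types \<and> p \<in> Pred) \<and>
     (\<forall>T p S \<mu>. \<delta> T p = Some (Ty S, \<mu>) \<longrightarrow> S \<in> Types)"

definition TP_sat :: "('i,'t) shape_fun \<Rightarrow> ('i,'l,'t) graph \<Rightarrow> bool" where
  "TP_sat \<delta> G \<longleftrightarrow> (\<forall>T p S \<mu> x y. \<delta> T p = Some (S, \<mu>) \<and> Typ (Ty T) x \<in> G \<and> Triple x p y \<in> G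
      \<longrightarrow> Typ S y \<in> G)"

definition PF_sat :: "('i,'t) shape_fun \<Rightarrow> ('i,'l,'t) graph \<Rightarrow> bool" where
  "PF_sat \<delta> G \<longleftrightarrow> (\<forall>T p S \<mu> x y1 y2. \<delta> T p = Some (S, \<mu>) \<and> \<mu> \<in> {M1, MOpt} \<and>
      Typ (Ty T) x \<in> G \<and> Triple x p y1 \<in> G \<and> Triple x p y2 \<in> G \<longrightarrow> y1 = y2)"

definition PE_sat :: "('i,'t) shape_fun \<Rightarrow> ('i,'l,'t) graph \<Rightarrow> bool" where
  "PE_sat \<delta> G \<longleftrightarrow> (\<forall>T p S \<mu> x. \<delta> T p = Some (S, \<mu>) \<and> \<mu> \<in> {M1, MPlus} \<and> Typ (Ty T) x \<in> G
      \<longrightarrow> (\<exists>y. Triple x p y \<in> G))"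

definition satisfies_schema :: "'i set \<Rightarrow> 't set \<Rightarrow> ('i,'t) shape_fun \<Rightarrow> ('i,'l,'t) graph \<Rightarrow> bool" where
  "satisfies_schema Pred Types \<delta> G \<longleftrightarrow>
     typed_graph Pred Types G \<and> TP_sat \<delta> G \<and> PF_sat \<delta> G \<and> PE_sat \<delta> G"

definition Req :: "('i,'t) shape_fun \<Rightarrow> 't ty set \<Rightarrow> 'i set" where
  "Req \<delta> X = {p. \<exists>T S \<mu>. Ty T \<in> X \<and> \<delta> T p = Some (S, \<mu>) \<and> \<mu> \<in> {M1, MPlus}}"

definition Delta :: "('i,'t) shape_fun \<Rightarrow> 't ty set \<Rightarrow> 'i \<Rightarrow> 't ty set" where
  "Delta \<delta> X p = {S. \<exists>T \<mu>. Ty T \<in> X \<and> \<delta> T p = Some (S, \<mu>)}"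

definition frontier :: "('i,'t) shape_fun \<Rightarrow> ('i,'l,'t) graph \<Rightarrow> (('i,'l) val \<times> 'i) set" where
  "frontier \<delta> G = {(n, p). n \<in> nodes G \<and> p \<in> Req \<delta> (types_of G n) \<and> (\<forall>m. Triple n p m \<notin> G)}"

text \<open>N_J = \<Union>_i N_i, as the least set closed under the two generating rules.\<close>
inductive_set NJ :: "('i,'t) shape_fun \<Rightarrow> ('i,'l,'t) graph \<Rightarrow> 't ty set set"
  for \<delta> :: "('i,'t) shape_fun" and G :: "('i,'l,'t) graph" where
  base: "(n, p) \<in> frontier \<delta> G \<Longrightarrow> Delta \<delta> (types_of G n) p \<in> NJ \<delta> G"
| step: "X \<in> NJ \<delta> G \<Longrightarrow> p \<in> Req \<delta> X \<Longrightarrow> Delta \<delta> X p \<in> NJ \<delta> G"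

definition rel_instance :: "'r set \<Rightarrow> ('r \<Rightarrow> nat) \<Rightarrow> ('r \<times> 'l list) set \<Rightarrow> bool" where
  "rel_instance Rels arity I \<longleftrightarrow> finite I \<and> (\<forall>(R, a) \<in> I. R \<in> Rels \<and> length a = arity R)"

datatype ('x,'f) tm = Var 'x | Fn 'f "'x list"

fun term_vars :: "('x,'f) tm \<Rightarrow> 'x set" where
  "term_vars (Var x) = {x}"
| "term_vars (Fn f xs) = set xs"

fun wf_term :: "'f set \<Rightarrow> ('f \<Rightarrow> nat) \<Rightarrow> ('x,'f) tm \<Rightarrow> bool" where
  "wf_term Fs farity (Var x) = True"
| "wf_term Fs farity (Fn f xs) = (f \<in> Fs \<and> length xs = farity f)"

datatype ('x,'f,'i,'t) hatom = HTriple "('x,'f) tm" 'i "('x,'f) tm" | HTyp "'t ty" "('x,'f) tm"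

fun hatom_vars :: "('x,'f,'i,'t) hatom \<Rightarrow> 'x set" where
  "hatom_vars (HTriple t1 p t2) = term_vars t1 \<union> term_vars t2"
| "hatom_vars (HTyp S t) = term_vars t"

text \<open>A full st-tgd: body (conjunction of relational atoms) and head.\<close>
type_synonym ('r,'x,'f,'i,'t) sttgd = "('r \<times> 'x list) list \<times> ('x,'f,'i,'t) hatom list"

fun eval_term :: "('f \<Rightarrow> 'l list \<Rightarrow> 'i) \<Rightarrow> ('x \<Rightarrow> 'l) \<Rightarrow> ('x,'f) tm \<Rightarrow> ('i,'l) val" where
  "eval_term F \<nu> (Var x) = Lit (\<nu> x)"
| "eval_term F \<nu> (Fn f xs) = Iri (F f (map \<nu> xs))"

fun inst_hatom :: "('f \<Rightarrow> 'l list \<Rightarrow> 'i) \<Rightarrow> ('x \<Rightarrow> 'l) \<Rightarrow> ('x,'f,'i,'t) hatom \<Rightarrow> ('i,'l,'t) fact" where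
  "inst_hatom F \<nu> (HTriple t1 p t2) = Triple (eval_term F \<nu> t1) p (eval_term F \<nu> t2)"
| "inst_hatom F \<nu> (HTyp S t) = Typ S (eval_term F \<nu> t)"

definition sat_st :: "('f \<Rightarrow> 'l list \<Rightarrow> 'i) \<Rightarrow> ('r,'x,'f,'i,'t) sttgd set \<Rightarrow> ('r \<times> 'l list) set
    \<Rightarrow> ('i,'l,'t) graph \<Rightarrow> bool" where
  "sat_st F Sst I G \<longleftrightarrow>
     (\<forall>(body, head) \<in> Sst. \<forall>\<nu>. (\<forall>(R, xs) \<in> set body. (R, map \<nu> xs) \<in> I) \<longrightarrow>
        (\<forall>h \<in> set head. inst_hatom F \<nu> h \<in> G))"

text \<open>Well-formedness of a constructive relational to RDF data exchange setting
  E = (R, S, \<Sigma>_st, F), with R = (Rels, arity, fds), S = (Types, \<delta>).\<close>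
definition constructive_setting ::
  "'r set \<Rightarrow> ('r \<Rightarrow> nat) \<Rightarrow> ('r \<times> nat set \<times> nat set) set \<Rightarrow>
   'i set \<Rightarrow> 't set \<Rightarrow> ('i,'t) shape_fun \<Rightarrow>
   ('r,'x,'f,'i,'t) sttgd set \<Rightarrow>
   'f set \<Rightarrow> ('f \<Rightarrow> nat) \<Rightarrow> ('f \<Rightarrow> 'l list \<Rightarrow> 'i) \<Rightarrow> bool" where
  "constructive_setting Rels arity fds Pred Types \<delta> Sst Fs farity F \<longleftrightarrow>
     (\<forall>(R, A, B) \<in> fds. R \<in> Rels \<and> A \<union> B \<subseteq> {..<arity R}) \<and>
     wf_shape_schema Pred Types \<delta> \<and>
     (\<forall>f \<in> Fs. \<forall>g \<in> Fs. \<forall>us vs. f \<noteq> g \<and> length us = farity f \<and> length vs = farity g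
        \<longrightarrow> F f us \<noteq> F g vs) \<and>
     finite Sst \<and>
     (\<forall>(body, head) \<in> Sst.
        (\<forall>(R, xs) \<in> set body. R \<in> Rels \<and> length xs = arity R) \<and>
        (\<forall>h \<in> set head. hatom_vars h \<subseteq> (\<Union>(R, xs) \<in> set body. set xs)) \<and>
        (\<forall>t1 p t2. HTriple t1 p t2 \<in> set head \<longrightarrow>
            p \<in> Pred \<and> wf_term Fs farity t1 \<and> wf_term Fs farity t2) \<and>
        (\<forall>S t. HTyp S t \<in> set head \<longrightarrow>
            (\<forall>T. S = Ty T \<longrightarrow> T \<in> Types) \<and> wf_term Fs farity t))"

end

theory Submission
  imports Defs
begin

text \<open>Every type set in \<open>N_J\<close> is forced onto a single node of any schema-satisfying extension
  \<open>J'\<close> of \<open>J\<close>: a frontier pair \<open>(n, p)\<close> still has its types in \<open>J'\<close>, and (PE) gives \<open>n\<close> a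
  \<open>p\<close>-successor which (TP) types with all of \<open>\<Delta>(types n, p)\<close>; each generating step of \<open>N_J\<close>
  repeats this argument. A node carrying both \<open>Literal\<close> and some \<open>T \<in> \<T>\<close> is impossible in a
  typed graph.\<close>

definition realized :: "('i,'l,'t) graph \<Rightarrow> 't ty set \<Rightarrow> bool" where
  "realized G X \<longleftrightarrow> (\<exists>n. X \<subseteq> types_of G n)"

lemma types_of_mono: "J \<subseteq> G \<Longrightarrow> types_of J n \<subseteq> types_of G n"
  unfolding types_of_def by blast

lemma Req_mono: "X \<subseteq> Y \<Longrightarrow> Req \<delta> X \<subseteq> Req \<delta> Y"
  unfolding Req_def by blast

lemma Delta_mono: "X \<subseteq> Y \<Longrightarrow> Delta \<delta> X p \<subseteq> Delta \<delta> Y p"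
  unfolding Delta_def by blast

lemma Delta_subset_types_of_successor:
  assumes TP: "TP_sat \<delta> G" and X: "X \<subseteq> types_of G n" and succ: "Triple n p m \<in> G"
  shows "Delta \<delta> X p \<subseteq> types_of G m"
proof
  fix S assume "S \<in> Delta \<delta> X p"
  then obtain T \<mu> where "Ty T \<in> X" "\<delta> T p = Some (S, \<mu>)"
    unfolding Delta_def by blast
  with X TP succ show "S \<in> types_of G m"
    unfolding TP_sat_def types_of_def by blast
qed

lemma Req_has_successor:
  assumes PE: "PE_sat \<delta> G" and X: "X \<subseteq> types_of G n" and p: "p \<in> Req \<delta> X"
  obtains m where "Triple n p m \<in> G"
proof -
  obtain T S \<mu> where "Ty T \<in> X" "\<delta> T p = Some (S, \<mu>)" "\<mu> \<in> {M1, MPlus}"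
    using p unfolding Req_def by blast
  with X PE show thesis
    using that unfolding PE_sat_def types_of_def by blast
qed

lemma realized_subset: "realized G Y \<Longrightarrow> X \<subseteq> Y \<Longrightarrow> realized G X"
  unfolding realized_def by blast

lemma realized_Delta:
  assumes "TP_sat \<delta> G" "PE_sat \<delta> G" "realized G X" "p \<in> Req \<delta> X"
  shows "realized G (Delta \<delta> X p)"
proof -
  obtain n where X: "X \<subseteq> types_of G n"
    using assms(3) unfolding realized_def by blast
  obtain m where "Triple n p m \<in> G"
    using Req_has_successor[OF assms(2) X assms(4)] .
  then show ?thesis
    using Delta_subset_types_of_successor[OF assms(1) X] unfolding realized_def by blast
qed

lemma NJ_realized:
  assumes "X \<in> NJ \<delta> J" "J \<subseteq> G" "TP_sat \<delta> G" "PE_sat \<delta> G"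
  shows "realized G X"
  using assms(1)
proof induction
  case (base n p)
  have types: "types_of J n \<subseteq> types_of G n"
    using types_of_mono[OF assms(2)] .
  have "p \<in> Req \<delta> (types_of J n)"
    using base unfolding frontier_def by blast
  then have "p \<in> Req \<delta> (types_of G n)"
    by (rule subsetD[OF Req_mono[OF types]])
  moreover have "realized G (types_of G n)"
    unfolding realized_def by blast
  ultimately have "realized G (Delta \<delta> (types_of G n) p)"
    using realized_Delta[OF assms(3,4)] by blast
  then show ?case
    using Delta_mono[OF types] by (rule realized_subset)
next
  case (step X p)
  then show ?case
    using realized_Delta[OF assms(3,4)] by blast
qed

lemma typed_graph_not_realized_Literal_Ty:
  assumes "typed_graph Pred Types G"
  shows "\<not> realized G {LiteralTy, Ty T}"
  using assms unfolding typed_graph_def realized_def types_of_def by blast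

theorem lemma6:
  fixes Rels :: "'r set" and arity :: "'r \<Rightarrow> nat" and fds :: "('r \<times> nat set \<times> nat set) set"
    and Pred :: "'i set" and Types :: "'t set" and \<delta> :: "('i,'t) shape_fun"
    and Sst :: "('r,'x,'f,'i,'t) sttgd set"
    and Fs :: "'f set" and farity :: "'f \<Rightarrow> nat" and F :: "'f \<Rightarrow> 'l list \<Rightarrow> 'i"
    and I :: "('r \<times> 'l list) set" and J :: "('i,'l,'t) graph"
  assumes setting: "constructive_setting Rels arity fds Pred Types \<delta> Sst Fs farity F"
    and inst: "rel_instance Rels arity I"
    and J_typed: "typed_graph Pred Types J"
    and J_st: "sat_st F Sst I J"
    and J_TP: "TP_sat \<delta> J"
    and J_PF: "PF_sat \<delta> J"
    and X_in: "X \<in> NJ \<delta> J"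
    and T_in: "T \<in> Types"
    and sub: "{LiteralTy, Ty T} \<subseteq> X"
  shows "\<not> (\<exists>J'. J \<subseteq> J' \<and> satisfies_schema Pred Types \<delta> J' \<and> sat_st F Sst I J')"
proof
  assume "\<exists>J'. J \<subseteq> J' \<and> satisfies_schema Pred Types \<delta> J' \<and> sat_st F Sst I J'"
  then obtain J' where "J \<subseteq> J'" and J': "satisfies_schema Pred Types \<delta> J'"
    by blast
  then have "realized J' X"
    using NJ_realized[OF X_in] unfolding satisfies_schema_def by blast
  then have "realized J' {LiteralTy, Ty T}"
    using sub by (rule realized_subset)
  moreover have "typed_graph Pred Types J'"
    using J' unfolding satisfies_schema_def by blast
  ultimately show False
    using typed_graph_not_realized_Literal_Ty by metis
qed

end
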